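(* Let $U\subseteq\mathbb{R}^d$ be a U-shaped convex set, let $\varepsilon>0$, and let $q\in\overline{\partial}U$ be an augmented point such that $\mathrm{Cap}_\varepsilon(q)(U)$ is bounded. Let $H^-$ be the closed lower halfspace bounded by $h(q)$, let $T=\mathrm{conv}(U\cup\{q-\varepsilon\})\cap H^-$, and let $T'$ be the scaling of $T$ by factor $2$ about $q-\varepsilon$. Then: (i) $T+\varepsilon\subseteq U\cap(H^-+\varepsilon)\subseteq T'$; (ii) $\mathrm{vol}(U\cap(H^-+\varepsilon))=\Theta(\mathrm{vol}(T))$; (iii) $\mathrm{vol}(T)=\Omega(\varepsilon\cdot\mathrm{area}(\mathrm{DBase}_\varepsilon(q)^\downarrow))$; (iv) the vertical projection onto $\overline{\partial}U$ of any point in the interior of $T+\varepsilon$, augmented by any supporting hyperplane through that projected point, lies in $\mathrm{DCap}_\varepsilon(q)(U)$. The constants in $\Theta$ and $\Omega$ depend only on $d$.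
   Context: Coordinates in $\mathbb{R}^d$ have the last coordinate as upward vertical direction. A closed convex set $U$ is U-shaped if for every boundary point the upward vertical ray from it lies in $U$. The lower boundary $\overline{\partial}U$ is the set of boundary points of $U$ with a non-vertical supporting hyperplane; each point $q$ is augmented by a choice $h(q)$ of non-vertical supporting hyperplane at $q$. For a point or set $S$, $S\pm\varepsilon$ denotes vertical translation by $\pm\varepsilon$, and $S^\downarrow$ the orthogonal projection onto the hyperplane $\{y=0\}$, identified with $\mathbb{R}^{d-1}$; $\mathrm{area}$ of a subset of $\mathbb{R}^{d-1}$ is its $(d-1)$-dimensional Lebesgue measure. The $\varepsilon$-cap $\mathrm{Cap}_\varepsilon(q)(U)$ is the set of augmented points of $\overline{\partial}U$ in the closed lower halfspace of $h(q)+\varepsilon$. The $\varepsilon$-dual cap $\mathrm{DCap}_\varepsilon(q)(U)$ is the set of augmented points $p\in\overline{\partial}U$ such that $q-\varepsilon$ lies in the closed lower halfspace of $h(p)$; its base is $\mathrm{DBase}_\varepsilon(q)=h(q)\cap\mathrm{conv}(U\cup\{q-\varepsilon\})$. *)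

theory Defs
  imports "HOL-Analysis.Analysis"
begin

text \<open>Points of R^d are pairs (x, y) with x in R^(d-1) (type 'a) and y the vertical
  coordinate.  A non-vertical hyperplane is encoded by (a, b) :: 'a \<times> real and stands
  for {(x,y). y = a \<bullet> x + b}.\<close>

definition vshift :: "real \<Rightarrow> ('a::euclidean_space \<times> real) \<Rightarrow> 'a \<times> real" where
  "vshift t p = (fst p, snd p + t)"

definition hplane :: "('a::euclidean_space \<times> real) \<Rightarrow> ('a \<times> real) set" where
  "hplane h = {p. snd p = fst h \<bullet> fst p + snd h}"

definition lower_hs :: "('a::euclidean_space \<times> real) \<Rightarrow> ('a \<times> real) set" where
  "lower_hs h = {p. snd p \<le> fst h \<bullet> fst p + snd h}"

definition upper_hs :: "('a::euclidean_space \<times> real) \<Rightarrow> ('a \<times> real) set" where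
  "upper_hs h = {p. snd p \<ge> fst h \<bullet> fst p + snd h}"

definition hshift :: "real \<Rightarrow> ('a::euclidean_space \<times> real) \<Rightarrow> 'a \<times> real" where
  "hshift t h = (fst h, snd h + t)"

definition U_shaped :: "('a::euclidean_space \<times> real) set \<Rightarrow> bool" where
  "U_shaped U \<longleftrightarrow> closed U \<and> convex U \<and> (\<forall>p\<in>frontier U. \<forall>t\<ge>0. vshift t p \<in> U)"

definition supports :: "('a::euclidean_space \<times> real) set \<Rightarrow> 'a \<times> real \<Rightarrow> 'a \<times> real \<Rightarrow> bool" where
  "supports U p h \<longleftrightarrow> p \<in> hplane h \<and> (U \<subseteq> upper_hs h \<or> U \<subseteq> lower_hs h)"

definition aug_point :: "('a::euclidean_space \<times> real) set \<Rightarrow> ('a \<times> real) \<times> ('a \<times> real) \<Rightarrow> bool" where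
  "aug_point U ph \<longleftrightarrow> fst ph \<in> frontier U \<and> supports U (fst ph) (snd ph)"

definition lower_boundary :: "('a::euclidean_space \<times> real) set \<Rightarrow> ('a \<times> real) set" where
  "lower_boundary U = {p. \<exists>h. aug_point U (p, h)}"

definition Cap :: "('a::euclidean_space \<times> real) set \<Rightarrow> real \<Rightarrow> ('a \<times> real) \<times> ('a \<times> real)
    \<Rightarrow> (('a \<times> real) \<times> ('a \<times> real)) set" where
  "Cap U \<epsilon> qh = {ph. aug_point U ph \<and> fst ph \<in> lower_hs (hshift \<epsilon> (snd qh))}"

definition DCap :: "('a::euclidean_space \<times> real) set \<Rightarrow> real \<Rightarrow> ('a \<times> real) \<times> ('a \<times> real)
    \<Rightarrow> (('a \<times> real) \<times> ('a \<times> real)) set" where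
  "DCap U \<epsilon> qh = {ph. aug_point U ph \<and> vshift (-\<epsilon>) (fst qh) \<in> lower_hs (snd ph)}"

definition DBase :: "('a::euclidean_space \<times> real) set \<Rightarrow> real \<Rightarrow> ('a \<times> real) \<times> ('a \<times> real)
    \<Rightarrow> ('a \<times> real) set" where
  "DBase U \<epsilon> qh = hplane (snd qh) \<inter> convex hull (insert (vshift (-\<epsilon>) (fst qh)) U)"

text \<open>vertical projection onto {y = 0}, identified with R^(d-1)\<close>
definition vproj :: "('a::euclidean_space \<times> real) set \<Rightarrow> 'a set" where
  "vproj S = fst ` S"

end

theory Submission
  imports Defs
begin

text \<open>Write \<open>c = q - \<epsilon>\<close>. A point of \<open>T\<close> is a convex combination of \<open>c\<close> and some \<open>b \<in> U\<close>;
  lifting it by \<open>\<epsilon>\<close> gives the same combination of \<open>q\<close> and \<open>b + \<epsilon>\<close>, which lies in \<open>U\<close> because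
  \<open>U\<close> is closed upwards. Conversely, the midpoint of \<open>c\<close> and a point of \<open>U \<inter> (H\<^sup>- + \<epsilon>)\<close> lies
  in \<open>T\<close>. Translation invariance and the scaling law of Lebesgue measure turn these two
  inclusions into (ii). For (iii), every point \<open>w\<close> of the dual base lies on \<open>h(q)\<close>, so \<open>T\<close>
  contains the triangles \<open>c w q\<close>, hence the slab of height \<open>\<epsilon>/2\<close> below \<open>h(q)\<close> over the
  half-size copy \<open>(q + DBase)/2\<close> of the projected base; Fubini measures that slab. For (iv),
  if \<open>c\<close> were strictly above \<open>h(p)\<close>, all of \<open>T\<close> would lie above \<open>h(p)\<close>; but points of \<open>T\<close>
  slightly below \<open>z - \<epsilon>\<close> exist, and \<open>z - \<epsilon>\<close> lies below \<open>h(q)\<close>, hence below \<open>p\<close>.\<close>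

lemma vshift_eq_add: "vshift t p = p + (0, t)"
  by (simp add: vshift_def prod_eq_iff)

lemma vshift_image_iff: "x \<in> vshift t ` S \<longleftrightarrow> vshift (-t) x \<in> S"
proof
  assume "vshift (-t) x \<in> S"
  moreover have "x = vshift t (vshift (-t) x)" by (simp add: vshift_def)
  ultimately show "x \<in> vshift t ` S" by blast
qed (auto simp: vshift_def)

lemma vshift_image_lower_hs: "vshift t ` lower_hs h = lower_hs (hshift t h)"
  unfolding set_eq_iff vshift_image_iff by (auto simp: lower_hs_def hshift_def vshift_def)

lemma convex_lower_hs: "convex (lower_hs h)"
proof -
  have "lower_hs h = {p. (- fst h, 1) \<bullet> p \<le> snd h}"
    by (auto simp: lower_hs_def inner_prod_def)
  then show ?thesis by (simp add: convex_halfspace_le)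
qed

lemma convex_upper_hs: "convex (upper_hs h)"
proof -
  have "upper_hs h = {p. (- fst h, 1) \<bullet> p \<ge> snd h}"
    by (auto simp: upper_hs_def inner_prod_def)
  then show ?thesis by (simp add: convex_halfspace_ge)
qed

lemma convex_hplane: "convex (hplane h)"
proof -
  have "hplane h = lower_hs h \<inter> upper_hs h"
    by (auto simp: hplane_def lower_hs_def upper_hs_def)
  then show ?thesis by (simp add: convex_Int convex_lower_hs convex_upper_hs)
qed

lemma U_shaped_vshift_mem:
  assumes U: "U_shaped U" and "u \<in> U" and "t \<ge> 0"
  shows "vshift t u \<in> U"
proof (rule ccontr)
  assume out: "vshift t u \<notin> U"
  have "closed_segment u (vshift t u) \<inter> frontier U \<noteq> {}"
    by (rule connected_Int_frontier) (use \<open>u \<in> U\<close> out in auto)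
  then obtain p where p: "p \<in> closed_segment u (vshift t u)" "p \<in> frontier U"
    by blast
  then obtain l where l: "0 \<le> l" "l \<le> 1" "p = (1 - l) *\<^sub>R u + l *\<^sub>R vshift t u"
    by (auto simp: in_segment)
  have "vshift ((1 - l) * t) p = vshift t u"
    using l by (simp add: vshift_def prod_eq_iff algebra_simps)
  moreover have "vshift ((1 - l) * t) p \<in> U"
    using U p(2) l \<open>t \<ge> 0\<close> unfolding U_shaped_def by simp
  ultimately show False using out by simp
qed

lemma aug_point_U_shapedD:
  assumes U: "U_shaped U" and "aug_point U (p, h)"
  shows "p \<in> U" and "p \<in> hplane h" and "U \<subseteq> upper_hs h"
proof -
  have front: "p \<in> frontier U" and supp: "supports U p h"
    using assms(2) by (auto simp: aug_point_def)
  show "p \<in> U"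
    using front U frontier_subset_closed by (auto simp: U_shaped_def)
  show "p \<in> hplane h" using supp by (simp add: supports_def)
  have "vshift 1 p \<in> U" using U front by (simp add: U_shaped_def)
  moreover have "vshift 1 p \<notin> lower_hs h"
    using \<open>p \<in> hplane h\<close> by (simp add: hplane_def lower_hs_def vshift_def)
  ultimately show "U \<subseteq> upper_hs h" using supp by (auto simp: supports_def)
qed

lemma negligible_convex_diff_interior:
  fixes S :: "'n::euclidean_space set"
  assumes "convex S"
  shows "negligible (S - interior S)"
  by (rule negligible_subset[OF negligible_convex_frontier[OF assms]])
    (use closure_subset in \<open>auto simp: frontier_def\<close>)

lemma convex_sets_lebesgue:
  fixes S :: "'n::euclidean_space set"
  assumes "convex S"
  shows "S \<in> sets lebesgue"
proof -
  have "S = interior S \<union> (S - interior S)" using interior_subset by blast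
  moreover have "S - interior S \<in> null_sets lebesgue"
    using negligible_convex_diff_interior[OF assms] by (simp add: negligible_iff_null_sets)
  moreover have "interior S \<in> sets lebesgue" by simp
  ultimately show ?thesis by (metis null_setsD2 sets.Un)
qed

lemma emeasure_interior_convex:
  fixes S :: "'n::euclidean_space set"
  assumes "convex S"
  shows "emeasure lebesgue (interior S) = emeasure lebesgue S"
proof -
  have "S = interior S \<union> (S - interior S)" using interior_subset by blast
  moreover have "S - interior S \<in> null_sets lebesgue"
    using negligible_convex_diff_interior[OF assms] by (simp add: negligible_iff_null_sets)
  moreover have "interior S \<in> sets lebesgue" by simp
  ultimately show ?thesis by (metis emeasure_Un_null_set)
qed

lemma emeasure_translate_dilate_sandwich:
  fixes A B :: "'n::euclidean_space set"
  assumes "(+) v ` A \<subseteq> B" and "B \<subseteq> (\<lambda>p. c + r *\<^sub>R (p - c)) ` A"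
    and "convex A" and "convex B"
  shows "emeasure lebesgue A \<le> emeasure lebesgue B"
    and "emeasure lebesgue B \<le> ennreal (\<bar>r\<bar> ^ DIM('n)) * emeasure lebesgue A"
proof -
  have "(+) v ` A = (\<lambda>x. 1 *\<^sub>R x + v) ` A" by (force simp: add.commute)
  then have "emeasure lebesgue A = emeasure lebesgue ((+) v ` A)"
    using emeasure_lebesgue_affine[of 1 v A] by simp
  also have "\<dots> \<le> emeasure lebesgue B"
    using assms(1) convex_sets_lebesgue[OF assms(4)] by (rule emeasure_mono)
  finally show "emeasure lebesgue A \<le> emeasure lebesgue B" .
  have dil: "(\<lambda>p. c + r *\<^sub>R (p - c)) ` A = (\<lambda>x. r *\<^sub>R x + (c - r *\<^sub>R c)) ` A"
    by (force simp: algebra_simps)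
  have "convex ((\<lambda>x. (c - r *\<^sub>R c) + r *\<^sub>R x) ` A)"
    using assms(3) by (rule convex_affinity)
  then have "(\<lambda>p. c + r *\<^sub>R (p - c)) ` A \<in> sets lebesgue"
    unfolding dil by (simp add: add.commute convex_sets_lebesgue)
  with assms(2) have "emeasure lebesgue B \<le> emeasure lebesgue ((\<lambda>p. c + r *\<^sub>R (p - c)) ` A)"
    by (rule emeasure_mono)
  also have "\<dots> = ennreal (\<bar>r\<bar> ^ DIM('n)) * emeasure lebesgue A"
    unfolding dil using emeasure_lebesgue_affine[of r "c - r *\<^sub>R c" A] by simp
  finally show "emeasure lebesgue B \<le> ennreal (\<bar>r\<bar> ^ DIM('n)) * emeasure lebesgue A" .
qed

lemma emeasure_slab_below_graph:
  fixes A :: "'a::euclidean_space set" and f :: "'a \<Rightarrow> real"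
  assumes A: "A \<in> sets borel" and f: "continuous_on UNIV f" and "e \<ge> 0"
  shows "emeasure lebesgue {p. fst p \<in> A \<and> f (fst p) - e \<le> snd p \<and> snd p \<le> f (fst p)}
    = ennreal e * emeasure lebesgue A"
proof -
  let ?S = "{p :: 'a \<times> real. fst p \<in> A \<and> f (fst p) - e \<le> snd p \<and> snd p \<le> f (fst p)}"
  have [measurable]: "f \<in> borel_measurable borel"
    using f by (rule borel_measurable_continuous_onI)
  have "{p \<in> space (borel \<Otimes>\<^sub>M borel). fst p \<in> A \<and> f (fst p) - e \<le> snd p \<and> snd p \<le> f (fst p)}
      \<in> sets (borel \<Otimes>\<^sub>M borel)"
    using A by measurable
  then have S_prod: "?S \<in> sets (borel \<Otimes>\<^sub>M borel)" by (simp add: space_pair_measure)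
  then have S: "?S \<in> sets borel" by (simp only: borel_prod)
  have "emeasure lebesgue ?S = emeasure (lborel \<Otimes>\<^sub>M lborel) ?S"
    using S by (simp add: lborel_prod)
  also have "\<dots> = (\<integral>\<^sup>+x. emeasure lborel (Pair x -` ?S) \<partial>lborel)"
    using S_prod by (intro lborel.emeasure_pair_measure_alt) simp
  also have "\<dots> = (\<integral>\<^sup>+x. ennreal e * indicator A x \<partial>lborel)"
  proof (rule nn_integral_cong)
    fix x :: 'a
    have "Pair x -` ?S = (if x \<in> A then {f x - e .. f x} else {})" by auto
    then show "emeasure lborel (Pair x -` ?S) = ennreal e * indicator A x"
      using \<open>e \<ge> 0\<close> by simp
  qed
  also have "\<dots> = ennreal e * emeasure lebesgue A"
    using A by (simp add: nn_integral_cmult_indicator)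
  finally show ?thesis .
qed

definition dual_cap_body ::
    "('a::euclidean_space \<times> real) set \<Rightarrow> real \<Rightarrow> 'a \<times> real \<Rightarrow> 'a \<times> real \<Rightarrow> ('a \<times> real) set" where
  "dual_cap_body U e q hq = convex hull (insert (vshift (-e) q) U) \<inter> lower_hs hq"

lemma convex_dual_cap_body: "convex (dual_cap_body U e q hq)"
  unfolding dual_cap_body_def by (intro convex_Int convex_convex_hull convex_lower_hs)

lemma vshift_dual_cap_body_subset:
  assumes U: "U_shaped U" and "q \<in> U" and "e \<ge> 0"
  shows "vshift e ` dual_cap_body U e q hq \<subseteq> U \<inter> lower_hs (hshift e hq)"
proof
  fix z assume "z \<in> vshift e ` dual_cap_body U e q hq"
  then obtain x where x: "x \<in> convex hull (insert (vshift (-e) q) U)" "x \<in> lower_hs hq"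
    and z: "z = vshift e x"
    by (auto simp: dual_cap_body_def)
  have "convex U" using U by (simp add: U_shaped_def)
  then have hull: "convex hull U = U" by (rule hull_same)
  have "U \<noteq> {}" using \<open>q \<in> U\<close> by blast
  then obtain v b where v: "0 \<le> v" "v \<le> 1" and "b \<in> U"
    and xvb: "x = (1 - v) *\<^sub>R vshift (-e) q + v *\<^sub>R b"
    using x(1) unfolding convex_hull_insert_alt hull if_not_P[OF \<open>U \<noteq> {}\<close>] by blast
  have "z = (1 - v) *\<^sub>R q + v *\<^sub>R vshift e b"
    unfolding z xvb by (simp add: vshift_def prod_eq_iff algebra_simps)
  moreover have "vshift e b \<in> U"
    using U \<open>b \<in> U\<close> \<open>e \<ge> 0\<close> by (rule U_shaped_vshift_mem)
  ultimately have "z \<in> U"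
    using \<open>convex U\<close> \<open>q \<in> U\<close> v by (simp add: convexD)
  moreover have "z \<in> lower_hs (hshift e hq)"
    using x(2) z by (simp add: lower_hs_def hshift_def vshift_def)
  ultimately show "z \<in> U \<inter> lower_hs (hshift e hq)" ..
qed

text \<open>The midpoint of \<open>q - e\<close> and a point at most \<open>e\<close> above \<open>h(q)\<close> is below \<open>h(q)\<close>.\<close>
lemma subset_dilation_dual_cap_body:
  assumes "q \<in> hplane hq"
  shows "U \<inter> lower_hs (hshift e hq)
    \<subseteq> (\<lambda>p. vshift (-e) q + 2 *\<^sub>R (p - vshift (-e) q)) ` dual_cap_body U e q hq"
proof
  fix p assume p: "p \<in> U \<inter> lower_hs (hshift e hq)"
  define m where "m = (1/2) *\<^sub>R vshift (-e) q + (1/2) *\<^sub>R p"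
  have "m \<in> convex hull (insert (vshift (-e) q) U)"
    unfolding m_def using p by (intro convexD) (auto intro: hull_inc)
  moreover have "m \<in> lower_hs hq"
    using p assms unfolding m_def
    by (simp add: lower_hs_def hplane_def hshift_def vshift_def inner_add_right algebra_simps)
  moreover have "p = vshift (-e) q + 2 *\<^sub>R (m - vshift (-e) q)"
    unfolding m_def by (simp add: algebra_simps scaleR_2)
  ultimately show "p \<in> (\<lambda>p. vshift (-e) q + 2 *\<^sub>R (p - vshift (-e) q)) ` dual_cap_body U e q hq"
    unfolding dual_cap_body_def by blast
qed

text \<open>A point of the slab is a convex combination of \<open>q - e\<close>, a point \<open>w\<close> of the dual base
  and \<open>q\<close>; its depth below \<open>h(q)\<close> fixes the weight of \<open>q - e\<close>.\<close>
lemma slab_over_half_base_subset_dual_cap_body: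
  assumes "q \<in> U" and q: "q \<in> hplane hq" and "e > 0"
    and p: "fst p \<in> (\<lambda>w. (1/2) *\<^sub>R fst q + (1/2) *\<^sub>R w) ` vproj (DBase U e (q, hq))"
      "fst hq \<bullet> fst p + snd hq - e/2 \<le> snd p" "snd p \<le> fst hq \<bullet> fst p + snd hq"
  shows "p \<in> dual_cap_body U e q hq"
proof -
  let ?c = "vshift (-e) q"
  obtain w where w: "w \<in> hplane hq" "w \<in> convex hull (insert ?c U)"
    and pw: "fst p = (1/2) *\<^sub>R fst q + (1/2) *\<^sub>R fst w"
    using p(1) by (auto simp: DBase_def vproj_def)
  define t where "t = (fst hq \<bullet> fst p + snd hq - snd p) / e"
  have t: "0 \<le> t" "t \<le> 1/2"
    using p(2,3) \<open>e > 0\<close> by (auto simp: t_def field_simps)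
  have "p = t *\<^sub>R ?c + (1/2) *\<^sub>R w + (1/2 - t) *\<^sub>R q"
  proof (rule prod_eqI)
    show "fst p = fst (t *\<^sub>R ?c + (1/2) *\<^sub>R w + (1/2 - t) *\<^sub>R q)"
      using pw by (simp add: vshift_def algebra_simps)
    have "snd p = fst hq \<bullet> fst p + snd hq - t * e"
      using \<open>e > 0\<close> by (simp add: t_def)
    also have "\<dots> = t * (snd q - e) + (1/2) * snd w + (1/2 - t) * snd q"
      using pw q w(1) by (simp add: hplane_def inner_add_right algebra_simps)
    finally show "snd p = snd (t *\<^sub>R ?c + (1/2) *\<^sub>R w + (1/2 - t) *\<^sub>R q)"
      by (simp add: vshift_def)
  qed
  then have "p \<in> convex hull {?c, w, q}"
    unfolding convex_hull_3 using t by force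
  also have "\<dots> \<subseteq> convex hull (insert ?c U)"
    using w(2) \<open>q \<in> U\<close> by (intro hull_minimal) (auto intro: hull_inc)
  finally show ?thesis
    using p(3) by (simp add: dual_cap_body_def lower_hs_def)
qed

text \<open>The slab is taken over the interior of the half-size base, which is open and hence Borel,
  while the base itself is only known to be convex.\<close>
lemma emeasure_dual_cap_body_ge_base:
  fixes U :: "('a::euclidean_space \<times> real) set"
  assumes "q \<in> U" and "q \<in> hplane hq" and "e > 0"
  shows "ennreal (e / 2 ^ DIM('a \<times> real)) * emeasure lebesgue (vproj (DBase U e (q, hq)))
    \<le> emeasure lebesgue (dual_cap_body U e q hq)"
proof -
  let ?D = "vproj (DBase U e (q, hq))"
  let ?D' = "(\<lambda>w. (1/2) *\<^sub>R fst q + (1/2) *\<^sub>R w) ` ?D"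
  let ?f = "\<lambda>x. fst hq \<bullet> x + snd hq"
  let ?S = "{p. fst p \<in> interior ?D' \<and> ?f (fst p) - e/2 \<le> snd p \<and> snd p \<le> ?f (fst p)}"
  have "convex (DBase U e (q, hq))"
    unfolding DBase_def by (intro convex_Int convex_hplane convex_convex_hull)
  then have "convex ?D"
    unfolding vproj_def by (rule convex_linear_image[OF linear_fst])
  have D': "?D' = (\<lambda>w. (1/2) *\<^sub>R w + (1/2) *\<^sub>R fst q) ` ?D"
    by (rule image_cong) (simp_all add: add.commute)
  have "convex ?D'"
    using \<open>convex ?D\<close> by (rule convex_affinity)
  have "ennreal (e / 2 ^ DIM('a \<times> real)) = ennreal (e/2) * ennreal ((1/2) ^ DIM('a))"
    using \<open>e > 0\<close> by (subst ennreal_mult[symmetric]) (auto simp: power_one_over)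
  then have "ennreal (e / 2 ^ DIM('a \<times> real)) * emeasure lebesgue ?D
      = ennreal (e/2) * (ennreal ((1/2) ^ DIM('a)) * emeasure lebesgue ?D)"
    by (simp add: mult.assoc)
  also have "\<dots> = ennreal (e/2) * emeasure lebesgue ?D'"
    using emeasure_lebesgue_affine[of "1/2" "(1/2) *\<^sub>R fst q" ?D] by (simp add: D')
  also have "\<dots> = ennreal (e/2) * emeasure lebesgue (interior ?D')"
    by (simp only: emeasure_interior_convex[OF \<open>convex ?D'\<close>])
  also have "\<dots> = emeasure lebesgue ?S"
    using \<open>e > 0\<close> by (intro emeasure_slab_below_graph[symmetric]) (auto intro!: continuous_intros)
  also have "\<dots> \<le> emeasure lebesgue (dual_cap_body U e q hq)"
  proof (rule emeasure_mono)
    show "?S \<subseteq> dual_cap_body U e q hq"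
      using slab_over_half_base_subset_dual_cap_body[OF assms] interior_subset by blast
  qed (rule convex_sets_lebesgue[OF convex_dual_cap_body])
  finally show ?thesis .
qed

lemma interior_vshift_dual_cap_body_DCap:
  assumes U: "U_shaped U" and "U \<subseteq> upper_hs hq" and p: "aug_point U (p, h)"
    and z: "z \<in> interior (vshift e ` dual_cap_body U e q hq)" and "fst p = fst z"
  shows "(p, h) \<in> DCap U e (q, hq)"
proof -
  let ?c = "vshift (-e) q"
  obtain r where "r > 0" and r: "ball z r \<subseteq> vshift e ` dual_cap_body U e q hq"
    using z mem_interior by blast
  have "z \<in> ball z r" and "vshift (- (r/2)) z \<in> ball z r"
    using \<open>r > 0\<close> by (auto simp: vshift_eq_add dist_norm)
  then have "z \<in> vshift e ` dual_cap_body U e q hq"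
    and "vshift (- (r/2)) z \<in> vshift e ` dual_cap_body U e q hq"
    using r by auto
  then have z_in: "vshift (-e) z \<in> dual_cap_body U e q hq"
    and below_z: "vshift (-e) (vshift (- (r/2)) z) \<in> dual_cap_body U e q hq"
    by (simp_all only: vshift_image_iff)
  have "snd z - e \<le> fst hq \<bullet> fst z + snd hq"
    using z_in by (simp add: dual_cap_body_def lower_hs_def vshift_def)
  also have "\<dots> \<le> snd p"
    using assms(2) aug_point_U_shapedD(1)[OF U p] \<open>fst p = fst z\<close> by (auto simp: upper_hs_def)
  also have "\<dots> = fst h \<bullet> fst z + snd h"
    using aug_point_U_shapedD(2)[OF U p] \<open>fst p = fst z\<close> by (simp add: hplane_def)
  finally have z_above: "snd z - e \<le> fst h \<bullet> fst z + snd h" .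
  have "?c \<in> lower_hs h"
  proof (rule ccontr)
    assume "?c \<notin> lower_hs h"
    then have "convex hull (insert ?c U) \<subseteq> upper_hs h"
      using aug_point_U_shapedD(3)[OF U p]
      by (intro hull_minimal convex_upper_hs) (auto simp: lower_hs_def upper_hs_def)
    then have "fst h \<bullet> fst z + snd h \<le> snd z - e - r/2"
      using below_z by (auto simp: dual_cap_body_def upper_hs_def vshift_def)
    with z_above \<open>r > 0\<close> show False by linarith
  qed
  then show ?thesis using p by (simp add: DCap_def)
qed

theorem lemma9:
  shows "\<exists>c1 c2 c3 :: real. c1 > 0 \<and> c2 > 0 \<and> c3 > 0 \<and>
    (\<forall>(U :: ('a::euclidean_space \<times> real) set) (\<epsilon>::real) q hq.
      U_shaped U \<and> \<epsilon> > 0 \<and> aug_point U (q, hq) \<and> bounded (fst ` Cap U \<epsilon> (q, hq)) \<longrightarrow>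
      (let Hm = lower_hs hq;
           c = vshift (-\<epsilon>) q;
           T = convex hull (insert c U) \<inter> Hm;
           T' = (\<lambda>p. c + 2 *\<^sub>R (p - c)) ` T;
           UH = U \<inter> vshift \<epsilon> ` Hm
       in vshift \<epsilon> ` T \<subseteq> UH \<and> UH \<subseteq> T'
        \<and> ennreal c1 * emeasure lebesgue T \<le> emeasure lebesgue UH
        \<and> emeasure lebesgue UH \<le> ennreal c2 * emeasure lebesgue T
        \<and> emeasure lebesgue T \<ge> ennreal (c3 * \<epsilon>) * emeasure lebesgue (vproj (DBase U \<epsilon> (q, hq)))
        \<and> (\<forall>z \<in> interior (vshift \<epsilon> ` T). \<forall>p h.
             p \<in> lower_boundary U \<and> fst p = fst z \<and> aug_point U (p, h)
             \<longrightarrow> (p, h) \<in> DCap U \<epsilon> (q, hq))))"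
proof (rule exI[of _ 1], rule exI[of _ "2 ^ DIM('a \<times> real)"],
    rule exI[of _ "1 / 2 ^ DIM('a \<times> real)"], intro conjI allI impI, goal_cases)
  case (4 U e q hq)
  then have U: "U_shaped U" and "e > 0" and q: "aug_point U (q, hq)" by auto
  note q_facts = aug_point_U_shapedD[OF U q]
  let ?T = "dual_cap_body U e q hq"
  have lower: "vshift e ` ?T \<subseteq> U \<inter> lower_hs (hshift e hq)"
    using U q_facts(1) \<open>e > 0\<close> by (intro vshift_dual_cap_body_subset) auto
  have upper: "U \<inter> lower_hs (hshift e hq)
      \<subseteq> (\<lambda>p. vshift (-e) q + 2 *\<^sub>R (p - vshift (-e) q)) ` ?T"
    using q_facts(2) by (rule subset_dilation_dual_cap_body)
  have translate: "(+) (0, e) ` ?T \<subseteq> U \<inter> lower_hs (hshift e hq)"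
    using lower by (simp add: vshift_eq_add add.commute)
  have "convex (U \<inter> lower_hs (hshift e hq))"
    using U by (simp add: U_shaped_def convex_Int convex_lower_hs)
  note measure_bounds =
    emeasure_translate_dilate_sandwich[OF translate upper convex_dual_cap_body this]
  show ?case
    unfolding Let_def vshift_image_lower_hs dual_cap_body_def[symmetric]
    using lower upper measure_bounds
      emeasure_dual_cap_body_ge_base[OF q_facts(1,2) \<open>e > 0\<close>]
      interior_vshift_dual_cap_body_DCap[OF U q_facts(3)]
    by auto
qed auto

end
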